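(* For any sets $X,Y$, the map $(-)^\dagger:(X\to\mathcal W(Y))\to(\mathcal W(X)\to\mathcal W(Y))$ is Scott continuous, where function spaces carry the pointwise order.
   Context: $\mathcal A=\langle U,+,\cdot,\mathbf 0,\mathbf 1\rangle$ is a partial semiring ($+$ commutative, associative, possibly partial, unit $\mathbf 0$; $\cdot$ total, associative, unit $\mathbf 1$; two-sided distributivity; $\mathbf 0$ annihilates), naturally ordered ($u\le v$ iff $\exists w.\,u+w=v$ is a partial order), Scott continuous (for every directed $D\subseteq U$ and $y$: $\sup_{x\in D}(x+y)=(\sup D)+y$, $\sup_{x\in D}(x\cdot y)=(\sup D)\cdot y$, $\sup_{x\in D}(y\cdot x)=y\cdot\sup D$), with a top element. Infinite sums are suprema of finite partial sums. $\mathcal W(X)$: maps $m:X\to U$ with countable support $\mathrm{supp}(m)=\{x:m(x)\neq\mathbf 0\}$ and defined mass $\sum_{x\in\mathrm{supp}(m)}m(x)$, ordered by $m_1\sqsubseteq m_2$ iff $m_1+m=m_2$ for some $m$ (operations pointwise). Functions $f,g:X\to\mathcal W(Y)$ are ordered by $f\sqsubseteq^\bullet g$ iff $f(x)\sqsubseteq g(x)$ for all $x$; similarly for functions $\mathcal W(X)\to\mathcal W(Y)$. $f^\dagger(m)(y)=\sum_{x\in\mathrm{supp}(m)}m(x)\cdot f(x)(y)$. Scott continuous means preserving suprema of directed sets. *)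

theory Defs
  imports Main "HOL-Library.Countable_Set"
begin

definition partial_semiring ::
  "('u \<Rightarrow> 'u \<Rightarrow> 'u option) \<Rightarrow> ('u \<Rightarrow> 'u \<Rightarrow> 'u) \<Rightarrow> 'u \<Rightarrow> 'u \<Rightarrow> bool" where
  "partial_semiring add mul z one \<longleftrightarrow>
     (\<forall>a b. add a b = add b a) \<and>
     (\<forall>a b c. Option.bind (add a b) (\<lambda>s. add s c) = Option.bind (add b c) (\<lambda>s. add a s)) \<and>
     (\<forall>a. add a z = Some a) \<and>
     (\<forall>a b c. mul (mul a b) c = mul a (mul b c)) \<and>
     (\<forall>a. mul one a = a \<and> mul a one = a) \<and>
     (\<forall>a b c s. add b c = Some s \<longrightarrow>
        add (mul a b) (mul a c) = Some (mul a s) \<and> add (mul b a) (mul c a) = Some (mul s a)) \<and>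
     (\<forall>a. mul z a = z \<and> mul a z = z)"

definition ps_le :: "('u \<Rightarrow> 'u \<Rightarrow> 'u option) \<Rightarrow> 'u \<Rightarrow> 'u \<Rightarrow> bool" where
  "ps_le add u v \<longleftrightarrow> (\<exists>w. add u w = Some v)"

definition lub_wrt :: "('a \<Rightarrow> 'a \<Rightarrow> bool) \<Rightarrow> 'a set \<Rightarrow> 'a set \<Rightarrow> 'a \<Rightarrow> bool" where
  "lub_wrt le C A s \<longleftrightarrow> s \<in> C \<and> (\<forall>a\<in>A. le a s) \<and> (\<forall>b\<in>C. (\<forall>a\<in>A. le a b) \<longrightarrow> le s b)"

definition directed_wrt :: "('a \<Rightarrow> 'a \<Rightarrow> bool) \<Rightarrow> 'a set \<Rightarrow> bool" where
  "directed_wrt le D \<longleftrightarrow> D \<noteq> {} \<and> (\<forall>a\<in>D. \<forall>b\<in>D. \<exists>c\<in>D. le a c \<and> le b c)"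

definition naturally_ordered :: "('u \<Rightarrow> 'u \<Rightarrow> 'u option) \<Rightarrow> bool" where
  "naturally_ordered add \<longleftrightarrow>
     (\<forall>u. ps_le add u u) \<and>
     (\<forall>u v w. ps_le add u v \<longrightarrow> ps_le add v w \<longrightarrow> ps_le add u w) \<and>
     (\<forall>u v. ps_le add u v \<longrightarrow> ps_le add v u \<longrightarrow> u = v)"

definition ps_scott_continuous ::
  "('u \<Rightarrow> 'u \<Rightarrow> 'u option) \<Rightarrow> ('u \<Rightarrow> 'u \<Rightarrow> 'u) \<Rightarrow> bool" where
  "ps_scott_continuous add mul \<longleftrightarrow>
     (\<forall>D. directed_wrt (ps_le add) D \<longrightarrow> (\<exists>s. lub_wrt (ps_le add) UNIV D s)) \<and>
     (\<forall>D s y. directed_wrt (ps_le add) D \<longrightarrow> lub_wrt (ps_le add) UNIV D s \<longrightarrow>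
        ((\<forall>x\<in>D. add x y \<noteq> None) \<longrightarrow>
           (\<exists>t. add s y = Some t \<and> lub_wrt (ps_le add) UNIV ((\<lambda>x. the (add x y)) ` D) t)) \<and>
        lub_wrt (ps_le add) UNIV ((\<lambda>x. mul x y) ` D) (mul s y) \<and>
        lub_wrt (ps_le add) UNIV ((\<lambda>x. mul y x) ` D) (mul y s))"

definition has_top :: "('u \<Rightarrow> 'u \<Rightarrow> 'u option) \<Rightarrow> bool" where
  "has_top add \<longleftrightarrow> (\<exists>t. \<forall>u. ps_le add u t)"

inductive fsum_rel :: "('u \<Rightarrow> 'u \<Rightarrow> 'u option) \<Rightarrow> 'u \<Rightarrow> ('a \<Rightarrow> 'u) \<Rightarrow> 'a set \<Rightarrow> 'u \<Rightarrow> bool"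
  for add z f where
  empty: "fsum_rel add z f {} z"
| insert: "fsum_rel add z f F s \<Longrightarrow> x \<notin> F \<Longrightarrow> add (f x) s = Some s' \<Longrightarrow>
           fsum_rel add z f (insert x F) s'"

definition has_psum :: "('u \<Rightarrow> 'u \<Rightarrow> 'u option) \<Rightarrow> 'u \<Rightarrow> ('a \<Rightarrow> 'u) \<Rightarrow> 'a set \<Rightarrow> 'u \<Rightarrow> bool" where
  "has_psum add z f A s \<longleftrightarrow>
     (\<forall>F. finite F \<and> F \<subseteq> A \<longrightarrow> (\<exists>t. fsum_rel add z f F t)) \<and>
     lub_wrt (ps_le add) UNIV {t. \<exists>F. finite F \<and> F \<subseteq> A \<and> fsum_rel add z f F t} s"

definition psum :: "('u \<Rightarrow> 'u \<Rightarrow> 'u option) \<Rightarrow> 'u \<Rightarrow> ('a \<Rightarrow> 'u) \<Rightarrow> 'a set \<Rightarrow> 'u" where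
  "psum add z f A = (THE s. has_psum add z f A s)"

definition supp :: "'u \<Rightarrow> ('a \<Rightarrow> 'u) \<Rightarrow> 'a set" where
  "supp z m = {x. m x \<noteq> z}"

definition Wset :: "('u \<Rightarrow> 'u \<Rightarrow> 'u option) \<Rightarrow> 'u \<Rightarrow> ('a \<Rightarrow> 'u) set" where
  "Wset add z = {m. countable (supp z m) \<and> (\<exists>s. has_psum add z m (supp z m) s)}"

definition W_le :: "('u \<Rightarrow> 'u \<Rightarrow> 'u option) \<Rightarrow> 'u \<Rightarrow> ('a \<Rightarrow> 'u) \<Rightarrow> ('a \<Rightarrow> 'u) \<Rightarrow> bool" where
  "W_le add z m1 m2 \<longleftrightarrow> (\<exists>m \<in> Wset add z. \<forall>x. add (m1 x) (m x) = Some (m2 x))"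

definition fun_le :: "('u \<Rightarrow> 'u \<Rightarrow> 'u option) \<Rightarrow> 'u \<Rightarrow> ('x \<Rightarrow> 'y \<Rightarrow> 'u) \<Rightarrow> ('x \<Rightarrow> 'y \<Rightarrow> 'u) \<Rightarrow> bool" where
  "fun_le add z f g \<longleftrightarrow> (\<forall>x. W_le add z (f x) (g x))"

definition kfun_le :: "('u \<Rightarrow> 'u \<Rightarrow> 'u option) \<Rightarrow> 'u \<Rightarrow>
    (('x \<Rightarrow> 'u) \<Rightarrow> 'y \<Rightarrow> 'u) \<Rightarrow> (('x \<Rightarrow> 'u) \<Rightarrow> 'y \<Rightarrow> 'u) \<Rightarrow> bool" where
  "kfun_le add z F G \<longleftrightarrow> (\<forall>m \<in> Wset add z. W_le add z (F m) (G m))"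

definition Kleisli_dom :: "('u \<Rightarrow> 'u \<Rightarrow> 'u option) \<Rightarrow> 'u \<Rightarrow> ('x \<Rightarrow> 'y \<Rightarrow> 'u) set" where
  "Kleisli_dom add z = {f. \<forall>x. f x \<in> Wset add z}"

definition Kleisli_cod :: "('u \<Rightarrow> 'u \<Rightarrow> 'u option) \<Rightarrow> 'u \<Rightarrow> (('x \<Rightarrow> 'u) \<Rightarrow> 'y \<Rightarrow> 'u) set" where
  "Kleisli_cod add z = {F. \<forall>m \<in> Wset add z. F m \<in> Wset add z}"

definition dagger :: "('u \<Rightarrow> 'u \<Rightarrow> 'u option) \<Rightarrow> ('u \<Rightarrow> 'u \<Rightarrow> 'u) \<Rightarrow> 'u \<Rightarrow>
    ('x \<Rightarrow> 'y \<Rightarrow> 'u) \<Rightarrow> ('x \<Rightarrow> 'u) \<Rightarrow> 'y \<Rightarrow> 'u" where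
  "dagger add mul z f m = (\<lambda>y. psum add z (\<lambda>x. mul (m x) (f x y)) (supp z m))"

end

theory Submission
  imports Defs
begin

text \<open>\<open>f\<^sup>\<dagger>(m)(y)\<close> is the infinite sum \<open>\<Sum>\<^sub>x m(x) \<cdot> f(x)(y)\<close>, and an infinite sum is the directed
  supremum of its finite partial sums. Scott continuity of \<open>+\<close> extends by induction to finite sums,
  so finite and hence infinite sums commute with directed suprema of their summands; together with
  Scott continuity of multiplication, \<open>f \<mapsto> f\<^sup>\<dagger>\<close> therefore preserves directed suprema that are
  computed pointwise. Suprema in \<open>X \<rightarrow> \<W>(Y)\<close> are pointwise: \<open>\<W>(Y)\<close> is downward closed, so the
  pointwise supremum of a directed family lies in \<open>X \<rightarrow> \<W>(Y)\<close> below its supremum and hence equals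
  it. The top element makes the sums defining \<open>f\<^sup>\<dagger>(m)\<close> exist, as they are dominated by
  \<open>(\<Sum> m) \<cdot> \<top>\<close>, and a finite Fubini argument shows that \<open>f\<^sup>\<dagger>(m)\<close> again has a defined mass.\<close>

lemma directed_wrt_mono:
  "directed_wrt R I \<Longrightarrow> (\<And>i j. i \<in> I \<Longrightarrow> j \<in> I \<Longrightarrow> R i j \<Longrightarrow> R' i j) \<Longrightarrow> directed_wrt R' I"
  unfolding directed_wrt_def by blast

lemma directed_wrt_image:
  "directed_wrt R I \<Longrightarrow> (\<And>i j. i \<in> I \<Longrightarrow> j \<in> I \<Longrightarrow> R i j \<Longrightarrow> le (f i) (f j)) \<Longrightarrow>
    directed_wrt le (f ` I)"
  unfolding directed_wrt_def by (simp add: ball_simps) blast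

lemma directed_wrt_Fpow: "directed_wrt (\<subseteq>) (Fpow A)"
  unfolding directed_wrt_def Fpow_def by (intro conjI ballI bexI[of _ "_ \<union> _"]) auto

locale continuous_psemiring =
  fixes add :: "'u \<Rightarrow> 'u \<Rightarrow> 'u option" and mul :: "'u \<Rightarrow> 'u \<Rightarrow> 'u" and z one :: 'u
  assumes partial_semiring: "partial_semiring add mul z one"
    and naturally_ordered: "naturally_ordered add"
    and scott_continuous: "ps_scott_continuous add mul"
    and has_top: "has_top add"
begin

abbreviation le (infix "\<preceq>" 50) where "a \<preceq> b \<equiv> ps_le add a b"

abbreviation is_lub :: "'u set \<Rightarrow> 'u \<Rightarrow> bool" where
  "is_lub A s \<equiv> lub_wrt (ps_le add) UNIV A s"

abbreviation directed :: "'u set \<Rightarrow> bool" where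
  "directed D \<equiv> directed_wrt (ps_le add) D"

lemma add_commute: "add a b = add b a"
  using partial_semiring unfolding partial_semiring_def by blast

lemma add_assoc: "Option.bind (add a b) (\<lambda>s. add s c) = Option.bind (add b c) (add a)"
  using partial_semiring unfolding partial_semiring_def by blast

lemma add_zero_right [simp]: "add a z = Some a"
  using partial_semiring unfolding partial_semiring_def by blast

lemma add_zero_left [simp]: "add z a = Some a"
  using add_commute add_zero_right by metis

lemma mul_add_distrib_left: "add b c = Some s \<Longrightarrow> add (mul a b) (mul a c) = Some (mul a s)"
  using partial_semiring unfolding partial_semiring_def by blast

lemma mul_add_distrib_right: "add b c = Some s \<Longrightarrow> add (mul b a) (mul c a) = Some (mul s a)"
  using partial_semiring unfolding partial_semiring_def by blast

lemma mul_zero_left [simp]: "mul z a = z" and mul_zero_right [simp]: "mul a z = z"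
  using partial_semiring unfolding partial_semiring_def by blast+

lemma le_refl [simp]: "a \<preceq> a"
  using naturally_ordered unfolding naturally_ordered_def by blast

lemma le_trans: "a \<preceq> b \<Longrightarrow> b \<preceq> c \<Longrightarrow> a \<preceq> c"
  using naturally_ordered unfolding naturally_ordered_def by blast

lemma le_antisym: "a \<preceq> b \<Longrightarrow> b \<preceq> a \<Longrightarrow> a = b"
  using naturally_ordered unfolding naturally_ordered_def by blast

lemma zero_le [simp]: "z \<preceq> a"
  unfolding ps_le_def by auto

lemma le_zero_iff: "a \<preceq> z \<longleftrightarrow> a = z"
  using le_antisym zero_le le_refl by blast

lemma add_eq_imp_le_left: "add a b = Some c \<Longrightarrow> a \<preceq> c"
  unfolding ps_le_def by auto

lemma add_eq_imp_le_right: "add a b = Some c \<Longrightarrow> b \<preceq> c"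
  unfolding ps_le_def using add_commute by metis

lemma mul_left_mono: "a \<preceq> b \<Longrightarrow> mul c a \<preceq> mul c b"
  unfolding ps_le_def using mul_add_distrib_left by blast

lemma obtain_top: obtains t where "\<And>u. u \<preceq> t"
  using has_top unfolding has_top_def by blast

subsection \<open>Finite sums\<close>

text \<open>Partial addition becomes total on \<^typ>\<open>'u option\<close>, with \<^term>\<open>None\<close> absorbing, which
  makes finite sums available through \<^locale>\<open>comm_monoid_set\<close>.\<close>

definition add_opt :: "'u option \<Rightarrow> 'u option \<Rightarrow> 'u option" where
  "add_opt a b = Option.bind a (\<lambda>x. Option.bind b (add x))"

lemma add_opt_simps [simp]:
  "add_opt None b = None" "add_opt a None = None" "add_opt (Some x) (Some y) = add x y"
  unfolding add_opt_def by (cases a; simp)+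

lemma add_opt_eq_Some_iff: "add_opt a b = Some c \<longleftrightarrow> (\<exists>x y. a = Some x \<and> b = Some y \<and> add x y = Some c)"
  unfolding add_opt_def by (cases a; cases b) auto

lemma comm_monoid_add_opt: "comm_monoid add_opt (Some z)"
proof
  fix a b c :: "'u option"
  show "add_opt (add_opt a b) c = add_opt a (add_opt b c)"
    using add_assoc by (cases a; cases b; cases c) (simp_all add: add_opt_def)
  show "add_opt a b = add_opt b a"
    using add_commute by (cases a; cases b) simp_all
  show "add_opt a (Some z) = a"
    by (cases a) simp_all
qed

sublocale fin: comm_monoid_set add_opt "Some z"
  by (rule comm_monoid_set.intro[OF comm_monoid_add_opt])

definition sum_opt :: "('a \<Rightarrow> 'u) \<Rightarrow> 'a set \<Rightarrow> 'u option" where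
  "sum_opt f F = fin.F (\<lambda>x. Some (f x)) F"

lemma sum_opt_empty [simp]: "sum_opt f {} = Some z"
  unfolding sum_opt_def by simp

lemma sum_opt_insert:
  "finite F \<Longrightarrow> x \<notin> F \<Longrightarrow> sum_opt f (insert x F) = add_opt (Some (f x)) (sum_opt f F)"
  unfolding sum_opt_def by simp

lemma fsum_rel_iff: "fsum_rel add z f F s \<longleftrightarrow> finite F \<and> sum_opt f F = Some s"
proof
  show "fsum_rel add z f F s \<Longrightarrow> finite F \<and> sum_opt f F = Some s"
    by (induction rule: fsum_rel.induct) (auto simp: sum_opt_insert)
  assume "finite F \<and> sum_opt f F = Some s"
  then have "finite F" "sum_opt f F = Some s" by auto
  then show "fsum_rel add z f F s"
  proof (induction F arbitrary: s rule: finite_induct)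
    case empty
    then show ?case by (auto intro: fsum_rel.empty)
  next
    case (insert x F)
    then obtain t where "sum_opt f F = Some t" "add (f x) t = Some s"
      by (auto simp: sum_opt_insert add_opt_eq_Some_iff)
    with insert show ?case by (auto intro: fsum_rel.insert)
  qed
qed

lemma add_mono_left: "a \<preceq> a' \<Longrightarrow> add a' b = Some c' \<Longrightarrow> \<exists>c. add a b = Some c \<and> c \<preceq> c'"
proof -
  assume "a \<preceq> a'" and a'b: "add a' b = Some c'"
  then obtain w where w: "add a w = Some a'" unfolding ps_le_def by auto
  have "add_opt (add_opt (Some a) (Some b)) (Some w) = add_opt (add_opt (Some a) (Some w)) (Some b)"
    by (metis fin.assoc fin.commute)
  also have "\<dots> = Some c'" using w a'b by simp
  finally obtain c where "add a b = Some c" "add c w = Some c'" by (auto simp: add_opt_eq_Some_iff)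
  then show ?thesis unfolding ps_le_def by auto
qed

lemma add_mono:
  assumes "a \<preceq> a'" "b \<preceq> b'" "add a' b' = Some c'"
  shows "\<exists>c. add a b = Some c \<and> c \<preceq> c'"
proof -
  obtain c'' where "add b a' = Some c''" "c'' \<preceq> c'"
    using add_mono_left[OF assms(2)] assms(3) add_commute by metis
  moreover obtain c where "add a b = Some c" "c \<preceq> c''"
    using add_mono_left[OF assms(1)] calculation(1) add_commute by metis
  ultimately show ?thesis using le_trans by blast
qed

lemma sum_opt_mono:
  "finite F \<Longrightarrow> \<forall>x\<in>F. f x \<preceq> g x \<Longrightarrow> sum_opt g F = Some t \<Longrightarrow> \<exists>s. sum_opt f F = Some s \<and> s \<preceq> t"
proof (induction F arbitrary: t rule: finite_induct)
  case (insert x F)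
  then obtain t' where t': "sum_opt g F = Some t'" "add (g x) t' = Some t"
    by (auto simp: sum_opt_insert add_opt_eq_Some_iff)
  with insert obtain s' where "sum_opt f F = Some s'" "s' \<preceq> t'" by auto
  moreover obtain s where "add (f x) s' = Some s" "s \<preceq> t"
    using add_mono[OF _ \<open>s' \<preceq> t'\<close> t'(2), of "f x"] insert.prems(1) by auto
  ultimately show ?case using insert.hyps by (auto simp: sum_opt_insert)
qed simp

lemma sum_opt_subset_le:
  assumes "finite G" "F \<subseteq> G" "sum_opt f G = Some t"
  shows "\<exists>s. sum_opt f F = Some s \<and> s \<preceq> t"
proof -
  have "add_opt (sum_opt f (G - F)) (sum_opt f F) = Some t"
    using assms fin.subset_diff unfolding sum_opt_def by metis
  then show ?thesis using add_eq_imp_le_right by (auto simp: add_opt_eq_Some_iff)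
qed

lemma sum_opt_mult_left:
  "finite F \<Longrightarrow> sum_opt f F = Some s \<Longrightarrow> sum_opt (\<lambda>x. mul c (f x)) F = Some (mul c s)"
  by (induction F arbitrary: s rule: finite_induct)
    (auto simp: sum_opt_insert add_opt_eq_Some_iff intro: mul_add_distrib_left)

lemma sum_opt_mult_right:
  "finite F \<Longrightarrow> sum_opt f F = Some s \<Longrightarrow> sum_opt (\<lambda>x. mul (f x) c) F = Some (mul s c)"
  by (induction F arbitrary: s rule: finite_induct)
    (auto simp: sum_opt_insert add_opt_eq_Some_iff intro: mul_add_distrib_right)

lemma sum_opt_neutral: "\<forall>x\<in>F. f x = z \<Longrightarrow> sum_opt f F = Some z"
  unfolding sum_opt_def by (rule fin.neutral) auto

lemma sum_opt_mono_neutral: "finite F \<Longrightarrow> \<forall>x\<in>F - B. f x = z \<Longrightarrow> sum_opt f F = sum_opt f (F \<inter> B)"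
  unfolding sum_opt_def by (rule fin.mono_neutral_right) auto

lemma sum_opt_add:
  assumes "\<forall>x\<in>F. add (a x) (b x) = Some (c x)"
  shows "sum_opt c F = add_opt (sum_opt a F) (sum_opt b F)"
proof -
  have "sum_opt c F = fin.F (\<lambda>x. add_opt (Some (a x)) (Some (b x))) F"
    unfolding sum_opt_def using assms by (intro fin.cong) auto
  then show ?thesis unfolding sum_opt_def fin.distrib .
qed

subsection \<open>Directed suprema\<close>

lemma lub_unique: "is_lub A s \<Longrightarrow> is_lub A t \<Longrightarrow> s = t"
  unfolding lub_wrt_def using le_antisym by blast

lemma lub_singleton: "is_lub {a} a"
  unfolding lub_wrt_def by auto

lemma directed_has_lub: "directed D \<Longrightarrow> \<exists>s. is_lub D s"
  using scott_continuous unfolding ps_scott_continuous_def by blast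

lemma lub_add_right:
  "directed D \<Longrightarrow> is_lub D s \<Longrightarrow> \<forall>x\<in>D. add x y \<noteq> None \<Longrightarrow>
    \<exists>t. add s y = Some t \<and> is_lub ((\<lambda>x. the (add x y)) ` D) t"
  using scott_continuous unfolding ps_scott_continuous_def by blast

lemma lub_mult_left: "directed D \<Longrightarrow> is_lub D s \<Longrightarrow> is_lub ((\<lambda>x. mul y x) ` D) (mul y s)"
  using scott_continuous unfolding ps_scott_continuous_def by blast

lemma lub_mult_right: "directed D \<Longrightarrow> is_lub D s \<Longrightarrow> is_lub ((\<lambda>x. mul x y) ` D) (mul s y)"
  using scott_continuous unfolding ps_scott_continuous_def by blast

lemma lub_add:
  assumes D1: "directed D1" "is_lub D1 s1" and D2: "directed D2" "is_lub D2 s2"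
    and defined: "\<forall>a\<in>D1. \<forall>b\<in>D2. add a b \<noteq> None"
  shows "\<exists>t. add s1 s2 = Some t \<and> is_lub {the (add a b) |a b. a \<in> D1 \<and> b \<in> D2} t"
proof -
  have inner: "\<exists>t. add a s2 = Some t \<and> is_lub ((\<lambda>b. the (add a b)) ` D2) t" if "a \<in> D1" for a
  proof -
    have "\<forall>b\<in>D2. add b a \<noteq> None" using defined that by (simp add: add_commute[of _ a])
    then show ?thesis using lub_add_right[OF D2, of a] by (simp add: add_commute[of _ a])
  qed
  define ta where "ta a = the (add a s2)" for a
  have ta: "add a s2 = Some (ta a)" "is_lub ((\<lambda>b. the (add a b)) ` D2) (ta a)" if "a \<in> D1" for a
    using inner[OF that] unfolding ta_def by auto
  then obtain t where t: "add s1 s2 = Some t" "is_lub (ta ` D1) t"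
    using lub_add_right[OF D1, of s2] unfolding ta_def by auto
  have "is_lub {the (add a b) |a b. a \<in> D1 \<and> b \<in> D2} t"
    unfolding lub_wrt_def
  proof (intro conjI ballI impI UNIV_I)
    fix u assume "u \<in> {the (add a b) |a b. a \<in> D1 \<and> b \<in> D2}"
    then obtain a b where ab: "a \<in> D1" "b \<in> D2" "u = the (add a b)" by blast
    have "u \<preceq> ta a" using ta(2)[OF ab(1)] ab unfolding lub_wrt_def by blast
    moreover have "ta a \<preceq> t" using t(2) ab(1) unfolding lub_wrt_def by blast
    ultimately show "u \<preceq> t" by (rule le_trans)
  next
    fix c assume ub: "\<forall>u\<in>{the (add a b) |a b. a \<in> D1 \<and> b \<in> D2}. u \<preceq> c"
    have "ta a \<preceq> c" if "a \<in> D1" for a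
      using ta(2)[OF that] ub that unfolding lub_wrt_def by blast
    with t(2) show "t \<preceq> c" unfolding lub_wrt_def by blast
  qed
  with t(1) show ?thesis by blast
qed

text \<open>The form in which Scott continuity of \<open>+\<close> is applied: to two families that are monotone
  along a common directed index set, so that the sums along the diagonal are cofinal among all
  sums.\<close>

lemma lub_add_diagonal:
  assumes dir: "directed_wrt (\<lambda>i j. a i \<preceq> a j \<and> b i \<preceq> b j) I"
    and lubs: "is_lub (a ` I) sa" "is_lub (b ` I) sb"
    and c: "\<forall>i\<in>I. add (a i) (b i) = Some (c i)"
  shows "\<exists>sc. add sa sb = Some sc \<and> is_lub (c ` I) sc"
proof -
  have cross: "\<exists>k\<in>I. \<exists>t. add (a i) (b j) = Some t \<and> t \<preceq> c k" if ij: "i \<in> I" "j \<in> I" for i j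
  proof -
    obtain k where k: "k \<in> I" "a i \<preceq> a k" "b j \<preceq> b k"
      using dir ij unfolding directed_wrt_def by blast
    moreover have "add (a k) (b k) = Some (c k)" using c k(1) by blast
    ultimately show ?thesis using add_mono by blast
  qed
  have dir_a: "directed (a ` I)" using dir by (rule directed_wrt_image) simp
  have dir_b: "directed (b ` I)" using dir by (rule directed_wrt_image) simp
  have defined: "\<forall>u\<in>a ` I. \<forall>v\<in>b ` I. add u v \<noteq> None"
  proof (intro ballI)
    fix u v assume "u \<in> a ` I" "v \<in> b ` I"
    then obtain i j where "i \<in> I" "j \<in> I" "u = a i" "v = b j" by blast
    with cross show "add u v \<noteq> None" by fastforce
  qed
  obtain sc where sc: "add sa sb = Some sc"
    and lub: "is_lub {the (add u v) |u v. u \<in> a ` I \<and> v \<in> b ` I} sc"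
    using lub_add[OF dir_a lubs(1) dir_b lubs(2) defined] by blast
  have "is_lub (c ` I) sc"
    unfolding lub_wrt_def
  proof (intro conjI ballI impI UNIV_I)
    fix u assume "u \<in> c ` I"
    then obtain i where "i \<in> I" "u = the (add (a i) (b i))" using c by auto
    with lub show "u \<preceq> sc" unfolding lub_wrt_def by blast
  next
    fix d assume ub: "\<forall>u\<in>c ` I. u \<preceq> d"
    have "the (add (a i) (b j)) \<preceq> d" if ij: "i \<in> I" "j \<in> I" for i j
    proof -
      obtain k t where k: "k \<in> I" "add (a i) (b j) = Some t" "t \<preceq> c k"
        using cross[OF ij] by blast
      from k(1) ub have "c k \<preceq> d" by blast
      with k(3) have "t \<preceq> d" by (rule le_trans)
      with k(2) show ?thesis by simp
    qed
    then have "\<forall>u\<in>{the (add u v) |u v. u \<in> a ` I \<and> v \<in> b ` I}. u \<preceq> d" by blast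
    with lub show "sc \<preceq> d" unfolding lub_wrt_def by blast
  qed
  with sc show ?thesis by blast
qed

lemma sum_opt_directed_lub:
  assumes "finite F"
    and "directed_wrt (\<lambda>i j. \<forall>x\<in>F. \<phi> i x \<preceq> \<phi> j x) I"
    and "\<forall>x\<in>F. is_lub ((\<lambda>i. \<phi> i x) ` I) (\<psi> x)"
    and "sum_opt \<psi> F = Some t"
  shows "is_lub ((\<lambda>i. the (sum_opt (\<phi> i) F)) ` I) t"
  using assms
proof (induction F arbitrary: t rule: finite_induct)
  case empty
  then have "I \<noteq> {}" unfolding directed_wrt_def by blast
  then have "(\<lambda>i. the (sum_opt (\<phi> i) {})) ` I = {z}" by auto
  with empty.prems(3) show ?case using lub_singleton by simp
next
  case (insert x F)
  obtain t' where t': "sum_opt \<psi> F = Some t'" "add (\<psi> x) t' = Some t"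
    using insert.prems(3) insert.hyps by (auto simp: sum_opt_insert add_opt_eq_Some_iff)
  define \<Phi> where "\<Phi> i = the (sum_opt (\<phi> i) F)" for i
  have \<Phi>: "sum_opt (\<phi> i) F = Some (\<Phi> i) \<and> add (\<phi> i x) (\<Phi> i) = Some (the (sum_opt (\<phi> i) (insert x F)))"
    if i: "i \<in> I" for i
  proof -
    have "\<forall>y\<in>insert x F. \<phi> i y \<preceq> \<psi> y"
      using insert.prems(2) i unfolding lub_wrt_def by blast
    then obtain s where "sum_opt (\<phi> i) (insert x F) = Some s"
      using sum_opt_mono[OF _ _ insert.prems(3)] insert.hyps(1) by blast
    then show ?thesis
      using insert.hyps by (auto simp: \<Phi>_def sum_opt_insert add_opt_eq_Some_iff)
  qed
  have "directed_wrt (\<lambda>i j. \<forall>y\<in>F. \<phi> i y \<preceq> \<phi> j y) I"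
    using insert.prems(1) by (rule directed_wrt_mono) simp
  then have IH: "is_lub (\<Phi> ` I) t'"
    using insert.IH insert.prems(2) t'(1) unfolding \<Phi>_def by simp
  have "directed_wrt (\<lambda>i j. \<phi> i x \<preceq> \<phi> j x \<and> \<Phi> i \<preceq> \<Phi> j) I"
  proof (rule directed_wrt_mono[OF insert.prems(1)])
    fix i j assume "i \<in> I" "j \<in> I" and le: "\<forall>y\<in>insert x F. \<phi> i y \<preceq> \<phi> j y"
    then obtain s where "sum_opt (\<phi> i) F = Some s" "s \<preceq> \<Phi> j"
      using sum_opt_mono[OF insert.hyps(1) _ conjunct1[OF \<Phi>]] by blast
    with le \<Phi> \<open>i \<in> I\<close> show "\<phi> i x \<preceq> \<phi> j x \<and> \<Phi> i \<preceq> \<Phi> j"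
      by simp
  qed
  then obtain t'' where "add (\<psi> x) t' = Some t''" "is_lub ((\<lambda>i. the (sum_opt (\<phi> i) (insert x F))) ` I) t''"
    using lub_add_diagonal[where a="\<lambda>i. \<phi> i x" and c="\<lambda>i. the (sum_opt (\<phi> i) (insert x F))",
        OF _ _ IH] insert.prems(2) \<Phi> by blast
  with t'(2) show ?case by simp
qed

subsection \<open>Infinite sums\<close>

definition partial_sums :: "('a \<Rightarrow> 'u) \<Rightarrow> 'a set \<Rightarrow> 'u set" where
  "partial_sums f A = (\<lambda>F. the (sum_opt f F)) ` Fpow A"

definition sums_defined :: "('a \<Rightarrow> 'u) \<Rightarrow> 'a set \<Rightarrow> bool" where
  "sums_defined f A \<longleftrightarrow> (\<forall>F\<in>Fpow A. sum_opt f F \<noteq> None)"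

lemma has_psum_iff: "has_psum add z f A s \<longleftrightarrow> sums_defined f A \<and> is_lub (partial_sums f A) s"
proof -
  have defined_iff: "(\<forall>F. finite F \<and> F \<subseteq> A \<longrightarrow> (\<exists>t. fsum_rel add z f F t)) \<longleftrightarrow> sums_defined f A"
    unfolding sums_defined_def Fpow_def fsum_rel_iff by auto
  have sums_eq: "{t. \<exists>F. finite F \<and> F \<subseteq> A \<and> fsum_rel add z f F t} = partial_sums f A"
    if defined: "sums_defined f A"
  proof (intro equalityI subsetI)
    fix t assume "t \<in> {t. \<exists>F. finite F \<and> F \<subseteq> A \<and> fsum_rel add z f F t}"
    then obtain F where "F \<in> Fpow A" "sum_opt f F = Some t"
      unfolding fsum_rel_iff Fpow_def by blast
    then show "t \<in> partial_sums f A"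
      unfolding partial_sums_def by (metis image_eqI option.sel)
  next
    fix t assume "t \<in> partial_sums f A"
    then obtain F where "F \<in> Fpow A" "t = the (sum_opt f F)"
      unfolding partial_sums_def by blast
    with defined show "t \<in> {t. \<exists>F. finite F \<and> F \<subseteq> A \<and> fsum_rel add z f F t}"
      unfolding sums_defined_def Fpow_def fsum_rel_iff by auto
  qed
  show ?thesis
    unfolding has_psum_def defined_iff by (cases "sums_defined f A") (simp_all add: sums_eq)
qed

lemma sum_opt_Fpow_mono:
  assumes "sums_defined f A" "G \<in> Fpow A" "F \<subseteq> G"
  shows "the (sum_opt f F) \<preceq> the (sum_opt f G)"
proof -
  obtain t where t: "sum_opt f G = Some t" using assms(1,2) unfolding sums_defined_def by blast
  moreover have "finite G" using assms(2) unfolding Fpow_def by blast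
  ultimately obtain s where "sum_opt f F = Some s" "s \<preceq> t"
    using sum_opt_subset_le[OF _ assms(3)] by blast
  with t show ?thesis by simp
qed

lemma partial_sums_directed:
  assumes "sums_defined f A"
  shows "directed (partial_sums f A)"
  unfolding partial_sums_def using directed_wrt_Fpow
  by (rule directed_wrt_image) (rule sum_opt_Fpow_mono[OF assms])

lemma has_psum_exists: "sums_defined f A \<Longrightarrow> \<exists>s. has_psum add z f A s"
  using directed_has_lub[OF partial_sums_directed] has_psum_iff by blast

lemma has_psum_unique: "has_psum add z f A s \<Longrightarrow> has_psum add z f A t \<Longrightarrow> s = t"
  unfolding has_psum_iff using lub_unique by blast

lemma psum_eqI: "has_psum add z f A s \<Longrightarrow> psum add z f A = s"
  unfolding psum_def using has_psum_unique by blast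

lemma has_psum_partial_le:
  "has_psum add z f A s \<Longrightarrow> F \<in> Fpow A \<Longrightarrow> \<exists>t. sum_opt f F = Some t \<and> t \<preceq> s"
  unfolding has_psum_iff sums_defined_def partial_sums_def lub_wrt_def by fastforce

lemma has_psum_least:
  "has_psum add z f A s \<Longrightarrow> (\<And>F t. F \<in> Fpow A \<Longrightarrow> sum_opt f F = Some t \<Longrightarrow> t \<preceq> b) \<Longrightarrow> s \<preceq> b"
  unfolding has_psum_iff sums_defined_def partial_sums_def lub_wrt_def by fastforce

lemma has_psum_dominated:
  assumes le: "\<forall>x\<in>A. f x \<preceq> g x" and g: "has_psum add z g A t"
  shows "\<exists>s. has_psum add z f A s \<and> s \<preceq> t"
proof -
  have partial: "\<exists>s. sum_opt f F = Some s \<and> s \<preceq> t" if F: "F \<in> Fpow A" for F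
  proof -
    obtain u where u: "sum_opt g F = Some u" "u \<preceq> t" using has_psum_partial_le[OF g F] by blast
    moreover obtain s where "sum_opt f F = Some s" "s \<preceq> u"
      using sum_opt_mono[of F f g u] le F u(1) unfolding Fpow_def by blast
    ultimately show ?thesis using le_trans by blast
  qed
  then obtain s where s: "has_psum add z f A s"
    using has_psum_exists unfolding sums_defined_def by fastforce
  moreover have "s \<preceq> t" using has_psum_least[OF s] partial by force
  ultimately show ?thesis by blast
qed

lemma has_psum_mult_right:
  assumes "has_psum add z f A s"
  shows "has_psum add z (\<lambda>x. mul (f x) c) A (mul s c)"
proof -
  from assms have defined: "sums_defined f A" and lub: "is_lub (partial_sums f A) s"
    unfolding has_psum_iff by auto
  have sum_mult: "sum_opt (\<lambda>x. mul (f x) c) F = Some (mul (the (sum_opt f F)) c)"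
    if F: "F \<in> Fpow A" for F
  proof -
    obtain t where "sum_opt f F = Some t" using defined F unfolding sums_defined_def by blast
    moreover have "finite F" using F unfolding Fpow_def by blast
    ultimately show ?thesis using sum_opt_mult_right by simp
  qed
  then have "sums_defined (\<lambda>x. mul (f x) c) A"
    unfolding sums_defined_def by simp
  moreover have "partial_sums (\<lambda>x. mul (f x) c) A = (\<lambda>x. mul x c) ` partial_sums f A"
    unfolding partial_sums_def image_image using sum_mult by simp
  ultimately show ?thesis
    unfolding has_psum_iff using lub_mult_right[OF partial_sums_directed[OF defined] lub] by simp
qed

lemma has_psum_mono_neutral:
  assumes "B \<subseteq> A" "\<forall>x\<in>A - B. f x = z"
  shows "has_psum add z f A s \<longleftrightarrow> has_psum add z f B s"
proof -
  have restrict: "sum_opt f F = sum_opt f (F \<inter> B)" "F \<inter> B \<in> Fpow B" if F: "F \<in> Fpow A" for F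
  proof -
    from F have "finite F" "F \<subseteq> A" unfolding Fpow_def by auto
    with assms(2) show "sum_opt f F = sum_opt f (F \<inter> B)"
      using sum_opt_mono_neutral by blast
    from \<open>finite F\<close> show "F \<inter> B \<in> Fpow B" unfolding Fpow_def by blast
  qed
  have Fpow_B: "Fpow B \<subseteq> Fpow A" using assms(1) by (rule Fpow_mono)
  have "sums_defined f A \<longleftrightarrow> sums_defined f B"
    unfolding sums_defined_def by (metis restrict subsetD[OF Fpow_B])
  moreover have "partial_sums f A = partial_sums f B"
    unfolding partial_sums_def
  proof (intro equalityI image_subsetI)
    fix F assume "F \<in> Fpow A"
    from restrict[OF this] show "the (sum_opt f F) \<in> (\<lambda>F. the (sum_opt f F)) ` Fpow B"
      by (simp add: rev_image_eqI)
  next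
    fix F assume "F \<in> Fpow B"
    with Fpow_B show "the (sum_opt f F) \<in> (\<lambda>F. the (sum_opt f F)) ` Fpow A"
      by (intro imageI) blast
  qed
  ultimately show ?thesis unfolding has_psum_iff by simp
qed

lemma has_psum_neutral:
  assumes "\<forall>x\<in>A. f x = z"
  shows "has_psum add z f A z"
proof -
  have sums: "sum_opt f F = Some z" if "F \<in> Fpow A" for F
    using that assms by (intro sum_opt_neutral) (auto simp: Fpow_def)
  have "partial_sums f A = (\<lambda>F. z) ` Fpow A"
    unfolding partial_sums_def by (rule image_cong) (simp_all add: sums)
  also have "\<dots> = {z}"
    using Fpow_not_empty by (simp add: image_constant_conv)
  finally show ?thesis
    using sums unfolding has_psum_iff sums_defined_def using lub_singleton by simp
qed

lemma has_psum_add: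
  assumes a: "has_psum add z a A sa" and b: "has_psum add z b A sb" and c: "has_psum add z c A sc"
    and abc: "\<forall>x\<in>A. add (a x) (b x) = Some (c x)"
  shows "add sa sb = Some sc"
proof -
  from a b c have defined: "sums_defined a A" "sums_defined b A" "sums_defined c A"
    and lub_a: "is_lub ((\<lambda>F. the (sum_opt a F)) ` Fpow A) sa"
    and lub_b: "is_lub ((\<lambda>F. the (sum_opt b F)) ` Fpow A) sb"
    and lub_c: "is_lub ((\<lambda>F. the (sum_opt c F)) ` Fpow A) sc"
    by (simp_all only: has_psum_iff partial_sums_def)
  have partial_add: "add (the (sum_opt a F)) (the (sum_opt b F)) = Some (the (sum_opt c F))"
    if F: "F \<in> Fpow A" for F
  proof -
    obtain ta tb where ab: "sum_opt a F = Some ta" "sum_opt b F = Some tb"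
      using defined(1,2) F unfolding sums_defined_def by blast
    have "sum_opt c F = add_opt (sum_opt a F) (sum_opt b F)"
      using abc F unfolding Fpow_def by (intro sum_opt_add) blast
    with ab have "sum_opt c F = add ta tb" by simp
    moreover obtain tc where "sum_opt c F = Some tc"
      using defined(3) F unfolding sums_defined_def by blast
    ultimately show ?thesis using ab by (metis option.sel)
  qed
  have "directed_wrt (\<lambda>F G. the (sum_opt a F) \<preceq> the (sum_opt a G) \<and> the (sum_opt b F) \<preceq> the (sum_opt b G))
      (Fpow A)"
    using directed_wrt_Fpow by (rule directed_wrt_mono) (use defined sum_opt_Fpow_mono in blast)
  then obtain sc' where "add sa sb = Some sc'" "is_lub ((\<lambda>F. the (sum_opt c F)) ` Fpow A) sc'"
    using lub_add_diagonal[OF _ lub_a lub_b, where c="\<lambda>F. the (sum_opt c F)"] partial_add by blast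
  with lub_c show ?thesis using lub_unique by blast
qed

lemma sum_opt_has_psum_swap:
  "finite F \<Longrightarrow> \<forall>y\<in>F. has_psum add z (\<lambda>x. h x y) A (p y) \<Longrightarrow> \<forall>x\<in>A. sum_opt (h x) F = Some (q x) \<Longrightarrow>
    has_psum add z q A s \<Longrightarrow> sum_opt p F = Some s"
proof (induction F arbitrary: q s rule: finite_induct)
  case empty
  then have "has_psum add z q A z" by (simp add: has_psum_neutral)
  with empty.prems(3) show ?case using has_psum_unique by fastforce
next
  case (insert y F)
  define q' where "q' x = the (sum_opt (h x) F)" for x
  have q': "sum_opt (h x) F = Some (q' x)" "add (h x y) (q' x) = Some (q x)" if "x \<in> A" for x
    using insert.prems(2) that insert.hyps
    by (auto simp: q'_def sum_opt_insert add_opt_eq_Some_iff)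
  then have "\<forall>x\<in>A. q' x \<preceq> q x" using add_eq_imp_le_right by blast
  then obtain s' where s': "has_psum add z q' A s'"
    using has_psum_dominated insert.prems(3) by blast
  have "sum_opt p F = Some s'" using insert.IH insert.prems(1) q'(1) s' by blast
  moreover have "add (p y) s' = Some s"
    using has_psum_add[of "\<lambda>x. h x y" A "p y" q' s' q s] insert.prems q'(2) s' by blast
  ultimately show ?case using insert.hyps by (simp add: sum_opt_insert)
qed

lemma has_psum_directed_lub:
  assumes dir: "directed_wrt (\<lambda>i j. \<forall>x\<in>A. \<phi> i x \<preceq> \<phi> j x) I"
    and lub: "\<forall>x\<in>A. is_lub ((\<lambda>i. \<phi> i x) ` I) (\<psi> x)"
    and s: "has_psum add z \<psi> A s"
  shows "is_lub ((\<lambda>i. psum add z (\<phi> i) A) ` I) s"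
proof -
  have summable: "has_psum add z (\<phi> i) A (psum add z (\<phi> i) A) \<and> psum add z (\<phi> i) A \<preceq> s"
    if "i \<in> I" for i
  proof -
    have "\<forall>x\<in>A. \<phi> i x \<preceq> \<psi> x" using lub that unfolding lub_wrt_def by blast
    then show ?thesis using has_psum_dominated[OF _ s] psum_eqI by metis
  qed
  have "s \<preceq> b" if ub: "\<forall>i\<in>I. psum add z (\<phi> i) A \<preceq> b" for b
  proof (rule has_psum_least[OF s])
    fix F t assume F: "F \<in> Fpow A" and t: "sum_opt \<psi> F = Some t"
    have "directed_wrt (\<lambda>i j. \<forall>x\<in>F. \<phi> i x \<preceq> \<phi> j x) I"
      using dir by (rule directed_wrt_mono) (use F in \<open>auto simp: Fpow_def\<close>)
    then have "is_lub ((\<lambda>i. the (sum_opt (\<phi> i) F)) ` I) t"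
      using sum_opt_directed_lub[OF _ _ _ t] lub F unfolding Fpow_def by blast
    moreover have "the (sum_opt (\<phi> i) F) \<preceq> b" if i: "i \<in> I" for i
    proof -
      obtain u where u: "sum_opt (\<phi> i) F = Some u" "u \<preceq> psum add z (\<phi> i) A"
        using has_psum_partial_le[OF conjunct1[OF summable[OF i]] F] by blast
      have "psum add z (\<phi> i) A \<preceq> b" using ub i by blast
      with u(2) have "u \<preceq> b" by (rule le_trans)
      with u(1) show ?thesis by simp
    qed
    ultimately show "t \<preceq> b" unfolding lub_wrt_def by blast
  qed
  with summable show ?thesis unfolding lub_wrt_def by blast
qed

subsection \<open>The Kleisli extension\<close>

lemma Wset_has_psum:
  assumes "m \<in> Wset add z" "supp z m \<subseteq> B"
  shows "\<exists>s. has_psum add z m B s"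
proof -
  obtain s where "has_psum add z m (supp z m) s" using assms(1) unfolding Wset_def by blast
  moreover have "\<forall>x\<in>B - supp z m. m x = z" unfolding supp_def by blast
  ultimately show ?thesis using has_psum_mono_neutral[OF assms(2)] by blast
qed

lemma Wset_sum_opt_defined: "m \<in> Wset add z \<Longrightarrow> finite F \<Longrightarrow> \<exists>s. sum_opt m F = Some s"
  using Wset_has_psum[of m UNIV] unfolding has_psum_iff sums_defined_def Fpow_def by blast

lemma Wset_downward_closed:
  assumes m: "m \<in> Wset add z" and le: "\<forall>y. m' y \<preceq> m y"
  shows "m' \<in> Wset add z"
proof -
  have supp: "supp z m' \<subseteq> supp z m"
  proof
    fix y assume "y \<in> supp z m'"
    then have "m' y \<noteq> z" unfolding supp_def by simp
    with le have "m y \<noteq> z" using le_zero_iff by metis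
    then show "y \<in> supp z m" unfolding supp_def by simp
  qed
  then have "countable (supp z m')"
    using m countable_subset unfolding Wset_def by blast
  moreover obtain s where "has_psum add z m (supp z m) s"
    using m unfolding Wset_def by blast
  with le obtain s' where "has_psum add z m' (supp z m) s'"
    using has_psum_dominated[of "supp z m" m' m s] by blast
  moreover have "\<forall>x\<in>supp z m - supp z m'. m' x = z" unfolding supp_def by simp
  ultimately show ?thesis
    unfolding Wset_def using has_psum_mono_neutral[OF supp] by blast
qed

lemma W_le_imp_le: "W_le add z m1 m2 \<Longrightarrow> m1 y \<preceq> m2 y"
  unfolding W_le_def using add_eq_imp_le_left by blast

lemma W_le_iff: "m2 \<in> Wset add z \<Longrightarrow> W_le add z m1 m2 \<longleftrightarrow> (\<forall>y. m1 y \<preceq> m2 y)"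
proof (intro iffI allI)
  assume m2: "m2 \<in> Wset add z" and le: "\<forall>y. m1 y \<preceq> m2 y"
  define d where "d y = (SOME w. add (m1 y) w = Some (m2 y))" for y
  have d: "add (m1 y) (d y) = Some (m2 y)" for y
    using le unfolding d_def ps_le_def by (metis (mono_tags) someI_ex)
  then have "d \<in> Wset add z"
    using Wset_downward_closed[OF m2] add_eq_imp_le_right by blast
  with d show "W_le add z m1 m2" unfolding W_le_def by blast
qed (rule W_le_imp_le)

text \<open>Here the top element is needed: the sum \<open>\<Sum>\<^sub>x m(x) \<cdot> h(x)\<close> is dominated by
  \<open>(\<Sum> m) \<cdot> \<top>\<close>.\<close>

lemma Wset_weighted_has_psum:
  assumes "m \<in> Wset add z"
  shows "\<exists>s. has_psum add z (\<lambda>x. mul (m x) (h x)) (supp z m) s"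
proof -
  obtain t where t: "\<And>u. u \<preceq> t" using obtain_top by blast
  obtain M where "has_psum add z m (supp z m) M" using assms unfolding Wset_def by blast
  then have "has_psum add z (\<lambda>x. mul (m x) t) (supp z m) (mul M t)"
    by (rule has_psum_mult_right)
  moreover have "\<forall>x\<in>supp z m. mul (m x) (h x) \<preceq> mul (m x) t"
    using t mul_left_mono by blast
  ultimately show ?thesis
    using has_psum_dominated[of "supp z m" "\<lambda>x. mul (m x) (h x)" "\<lambda>x. mul (m x) t"] by blast
qed

lemma dagger_has_psum:
  assumes "m \<in> Wset add z"
  shows "has_psum add z (\<lambda>x. mul (m x) (g x y)) (supp z m) (dagger add mul z g m y)"
proof -
  obtain s where "has_psum add z (\<lambda>x. mul (m x) (g x y)) (supp z m) s"
    using Wset_weighted_has_psum[OF assms, of "\<lambda>x. g x y"] by blast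
  moreover from this have "dagger add mul z g m y = s"
    unfolding dagger_def by (rule psum_eqI)
  ultimately show ?thesis by simp
qed

lemma supp_dagger_subset:
  assumes "m \<in> Wset add z"
  shows "supp z (dagger add mul z g m) \<subseteq> (\<Union>x\<in>supp z m. supp z (g x))"
proof
  fix y assume y: "y \<in> supp z (dagger add mul z g m)"
  show "y \<in> (\<Union>x\<in>supp z m. supp z (g x))"
  proof (rule ccontr)
    assume "y \<notin> (\<Union>x\<in>supp z m. supp z (g x))"
    then have "\<forall>x\<in>supp z m. g x y = z" unfolding supp_def by blast
    then have "has_psum add z (\<lambda>x. mul (m x) (g x y)) (supp z m) z"
      by (intro has_psum_neutral) simp
    then have "dagger add mul z g m y = z"
      by (rule has_psum_unique[OF dagger_has_psum[OF assms]])
    with y show False unfolding supp_def by blast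
  qed
qed

lemma sum_opt_dagger_defined:
  assumes g: "g \<in> Kleisli_dom add z" and m: "m \<in> Wset add z" and F: "finite F"
  shows "sum_opt (dagger add mul z g m) F \<noteq> None"
proof -
  define q where "q x = mul (m x) (the (sum_opt (g x) F))" for x
  have q: "sum_opt (\<lambda>y. mul (m x) (g x y)) F = Some (q x)" for x
  proof -
    obtain v where "sum_opt (g x) F = Some v"
      using g Wset_sum_opt_defined[OF _ F] unfolding Kleisli_dom_def by blast
    with sum_opt_mult_left[OF F this] show ?thesis unfolding q_def by simp
  qed
  obtain s where "has_psum add z q (supp z m) s"
    using Wset_weighted_has_psum[OF m, of "\<lambda>x. the (sum_opt (g x) F)"] unfolding q_def by blast
  with F dagger_has_psum[OF m] q have "sum_opt (dagger add mul z g m) F = Some s"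
    by (intro sum_opt_has_psum_swap[of F "\<lambda>x y. mul (m x) (g x y)" "supp z m"]) auto
  then show ?thesis by simp
qed

lemma dagger_in_Wset:
  assumes g: "g \<in> Kleisli_dom add z" and m: "m \<in> Wset add z"
  shows "dagger add mul z g m \<in> Wset add z"
proof -
  have "countable (\<Union>x\<in>supp z m. supp z (g x))"
    using m g unfolding Wset_def Kleisli_dom_def by (intro countable_UN) auto
  then have "countable (supp z (dagger add mul z g m))"
    using supp_dagger_subset[OF m] by (rule countable_subset[rotated])
  moreover have "sums_defined (dagger add mul z g m) (supp z (dagger add mul z g m))"
    using sum_opt_dagger_defined[OF g m] unfolding sums_defined_def Fpow_def by blast
  ultimately show ?thesis unfolding Wset_def using has_psum_exists by blast
qed

lemma fun_le_iff: "g \<in> Kleisli_dom add z \<Longrightarrow> fun_le add z f g \<longleftrightarrow> (\<forall>x y. f x y \<preceq> g x y)"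
  unfolding fun_le_def Kleisli_dom_def using W_le_iff by blast

lemma kfun_le_iff:
  "G \<in> Kleisli_cod add z \<Longrightarrow> kfun_le add z F G \<longleftrightarrow> (\<forall>m\<in>Wset add z. \<forall>y. F m y \<preceq> G m y)"
  unfolding kfun_le_def Kleisli_cod_def using W_le_iff by blast

lemma Kleisli_dom_directed_pointwise:
  "D \<subseteq> Kleisli_dom add z \<Longrightarrow> directed_wrt (fun_le add z) D \<Longrightarrow>
    directed_wrt (\<lambda>f g. \<forall>x y. f x y \<preceq> g x y) D"
  by (erule directed_wrt_mono) (use fun_le_iff in blast)

lemma Kleisli_dom_lub_pointwise:
  assumes D: "D \<subseteq> Kleisli_dom add z" "directed_wrt (fun_le add z) D"
    and S: "lub_wrt (fun_le add z) (Kleisli_dom add z) D S"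
  shows "is_lub ((\<lambda>f. f x y) ` D) (S x y)"
proof -
  have S_dom: "S \<in> Kleisli_dom add z" using S unfolding lub_wrt_def by blast
  have below_S: "f x y \<preceq> S x y" if "f \<in> D" for f x y
    using S that fun_le_iff[OF S_dom] unfolding lub_wrt_def by blast
  have "directed ((\<lambda>f. f x y) ` D)" for x y
    using Kleisli_dom_directed_pointwise[OF D] by (rule directed_wrt_image) blast
  then have "\<exists>t. is_lub ((\<lambda>f. f x y) ` D) t" for x y
    using directed_has_lub by blast
  then obtain T where T: "\<And>x y. is_lub ((\<lambda>f. f x y) ` D) (T x y)"
    by metis
  have T_le_S: "T x y \<preceq> S x y" for x y
    using T[of x y] below_S unfolding lub_wrt_def by blast
  then have "T \<in> Kleisli_dom add z"
    using S_dom Wset_downward_closed unfolding Kleisli_dom_def by blast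
  moreover have "fun_le add z f T" if "f \<in> D" for f
    using calculation fun_le_iff T that unfolding lub_wrt_def by blast
  ultimately have "fun_le add z S T"
    using S unfolding lub_wrt_def by blast
  then have "S = T"
    using fun_le_iff[OF \<open>T \<in> Kleisli_dom add z\<close>] T_le_S le_antisym by blast
  with T show ?thesis by simp
qed

lemma dagger_directed_lub:
  assumes m: "m \<in> Wset add z"
    and dir: "directed_wrt (\<lambda>f g. \<forall>x y. f x y \<preceq> g x y) D"
    and lub: "\<And>x y. is_lub ((\<lambda>f. f x y) ` D) (S x y)"
  shows "is_lub ((\<lambda>f. dagger add mul z f m y) ` D) (dagger add mul z S m y)"
proof -
  have "directed_wrt (\<lambda>f g. \<forall>x\<in>supp z m. mul (m x) (f x y) \<preceq> mul (m x) (g x y)) D"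
    using dir by (rule directed_wrt_mono) (simp add: mul_left_mono)
  moreover have "\<forall>x\<in>supp z m. is_lub ((\<lambda>f. mul (m x) (f x y)) ` D) (mul (m x) (S x y))"
  proof
    fix x
    have "directed ((\<lambda>f. f x y) ` D)"
      using dir by (rule directed_wrt_image) blast
    from lub_mult_left[OF this lub] show "is_lub ((\<lambda>f. mul (m x) (f x y)) ` D) (mul (m x) (S x y))"
      by (simp add: image_image)
  qed
  ultimately show ?thesis
    unfolding dagger_def by (rule has_psum_directed_lub[OF _ _ dagger_has_psum[OF m, unfolded dagger_def]])
qed

theorem dagger_preserves_directed_lub:
  assumes D: "D \<subseteq> Kleisli_dom add z" "directed_wrt (fun_le add z) D"
    and S: "lub_wrt (fun_le add z) (Kleisli_dom add z) D S"
  shows "lub_wrt (kfun_le add z) (Kleisli_cod add z) (dagger add mul z ` D) (dagger add mul z S)"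
proof -
  have "S \<in> Kleisli_dom add z" using S unfolding lub_wrt_def by blast
  then have S_cod: "dagger add mul z S \<in> Kleisli_cod add z"
    unfolding Kleisli_cod_def using dagger_in_Wset by blast
  have lub: "is_lub ((\<lambda>f. dagger add mul z f m y) ` D) (dagger add mul z S m y)"
    if "m \<in> Wset add z" for m y
    using that Kleisli_dom_directed_pointwise[OF D] Kleisli_dom_lub_pointwise[OF D S]
    by (rule dagger_directed_lub)
  show ?thesis
    unfolding lub_wrt_def
  proof (intro conjI ballI impI S_cod)
    fix F assume "F \<in> dagger add mul z ` D"
    with lub show "kfun_le add z F (dagger add mul z S)"
      unfolding kfun_le_iff[OF S_cod] lub_wrt_def by blast
  next
    fix G assume "G \<in> Kleisli_cod add z" and "\<forall>F\<in>dagger add mul z ` D. kfun_le add z F G"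
    with lub show "kfun_le add z (dagger add mul z S) G"
      unfolding kfun_le_iff[OF \<open>G \<in> Kleisli_cod add z\<close>] lub_wrt_def by blast
  qed
qed

end

theorem lemmaA4:
  fixes add :: "'u \<Rightarrow> 'u \<Rightarrow> 'u option" and mul :: "'u \<Rightarrow> 'u \<Rightarrow> 'u" and z one :: 'u
    and D :: "('x \<Rightarrow> 'y \<Rightarrow> 'u) set" and S :: "'x \<Rightarrow> 'y \<Rightarrow> 'u"
  assumes "partial_semiring add mul z one"
    and "naturally_ordered add"
    and "ps_scott_continuous add mul"
    and "has_top add"
    and "D \<subseteq> Kleisli_dom add z"
    and "directed_wrt (fun_le add z) D"
    and "lub_wrt (fun_le add z) (Kleisli_dom add z) D S"
  shows "lub_wrt (kfun_le add z) (Kleisli_cod add z) (dagger add mul z ` D) (dagger add mul z S)"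
proof -
  interpret continuous_psemiring add mul z one
    using assms(1-4) by unfold_locales
  show ?thesis using dagger_preserves_directed_lub assms(5-7) .
qed

end
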